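(* Let $T$ be an open cone in $V$ with basepoint $b\in T$. For each $x\in\partial T\setminus[0]_T$, the set $A_T(x)$ is closed in the topology of pointwise convergence of functions on $T$ (relative to the set of Funk horofunctions of $T$): if $g_n\in A_T(x)$ converge pointwise to a Funk horofunction $g$, then $g\in A_T(x)$.
   Context: $V$ is a finite-dimensional real vector space. An open cone is a nonempty open convex set $T\subset V$ with $\lambda T\subseteq T$ for all $\lambda>0$ and $0\notin T$; $\partial T$ its boundary. Write $x\le_T y$ iff $y-x\in\overline T$, $[0]_T:=\overline T\cap(-\overline T)$. $M_T(y/x):=\inf\{\lambda>0:y\le_T\lambda x\}$, $F_T(y,x):=\log M_T(y/x)$. A sequence $(x_n)$ in $T$ converges in the Funk sense to $g$ if $F_T(\cdot,x_n)-F_T(b,x_n)\to g$ pointwise on $T$; a Funk horofunction is such a limit not of the form $F_T(\cdot,p)-F_T(b,p)$, $p\in T$. $A_T(x)$ is the set of Funk horofunctions that are Funk-sense limits of sequences in $T$ converging to $x$ in the usual topology of $V$. *)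

theory Defs
  imports "HOL-Analysis.Analysis"
begin

text \<open>V is modelled by a type of class euclidean_space (finite-dimensional real inner
product space; the inner product is irrelevant here, only the topology is used).\<close>

definition open_cone :: "'a::euclidean_space set \<Rightarrow> bool" where
  "open_cone T \<longleftrightarrow> T \<noteq> {} \<and> open T \<and> convex T \<and>
     (\<forall>c::real. c > 0 \<longrightarrow> (\<forall>x\<in>T. c *\<^sub>R x \<in> T)) \<and> 0 \<notin> T"

definition cone_le :: "'a::euclidean_space set \<Rightarrow> 'a \<Rightarrow> 'a \<Rightarrow> bool" where
  "cone_le T x y \<longleftrightarrow> y - x \<in> closure T"

definition cone_zero :: "'a::euclidean_space set \<Rightarrow> 'a set" where
  "cone_zero T = closure T \<inter> uminus ` closure T"

definition funk_M :: "'a::euclidean_space set \<Rightarrow> 'a \<Rightarrow> 'a \<Rightarrow> real" where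
  "funk_M T y x = Inf {c::real. c > 0 \<and> cone_le T y (c *\<^sub>R x)}"

definition funk_F :: "'a::euclidean_space set \<Rightarrow> 'a \<Rightarrow> 'a \<Rightarrow> real" where
  "funk_F T y x = ln (funk_M T y x)"

definition funk_converges ::
    "'a::euclidean_space set \<Rightarrow> 'a \<Rightarrow> (nat \<Rightarrow> 'a) \<Rightarrow> ('a \<Rightarrow> real) \<Rightarrow> bool" where
  "funk_converges T b xs g \<longleftrightarrow>
     (\<forall>y\<in>T. (\<lambda>n. funk_F T y (xs n) - funk_F T b (xs n)) \<longlonglongrightarrow> g y)"

definition funk_horofunction :: "'a::euclidean_space set \<Rightarrow> 'a \<Rightarrow> ('a \<Rightarrow> real) \<Rightarrow> bool" where
  "funk_horofunction T b g \<longleftrightarrow>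
     (\<exists>xs. (\<forall>n. xs n \<in> T) \<and> funk_converges T b xs g) \<and>
     \<not> (\<exists>p\<in>T. \<forall>y\<in>T. g y = funk_F T y p - funk_F T b p)"

definition funk_A :: "'a::euclidean_space set \<Rightarrow> 'a \<Rightarrow> 'a \<Rightarrow> ('a \<Rightarrow> real) \<Rightarrow> bool" where
  "funk_A T b x g \<longleftrightarrow> funk_horofunction T b g \<and>
     (\<exists>xs. (\<forall>n. xs n \<in> T) \<and> xs \<longlonglongrightarrow> x \<and> funk_converges T b xs g)"

end

theory Submission
  imports Defs
begin

(* The functions F_T(-,p) - F_T(b,p), p in T, form an equicontinuous family on T: by the
   triangle inequality for F_T their oscillation between y and w is at most
   max (F_T(y,w), F_T(w,y)), which does not depend on p and is small for y near w, since
   F_T(y,w) <= ln c whenever |y - w| < (c - 1) r and the ball B(w,r) lies in T. Equicontinuity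
   with non-strict bounds survives pointwise limits, so it extends to all g_n and to g.
   For each n pick a point of a sequence realising g_n that lies within 1/(n+1) of x and
   approximates g_n within 1/(n+1) at the first n+1 points of an enumeration of a countable
   dense subset of T. This diagonal sequence converges to x and its Funk limit is g on the
   dense subset, hence on all of T by equicontinuity. Neither b in T nor the position of x in the boundary of T
   outside [0]_T plays a role in the argument. *)

definition equicontinuous_on :: "'a::metric_space set \<Rightarrow> ('a \<Rightarrow> 'b::metric_space) set \<Rightarrow> bool"
  where "equicontinuous_on S \<F> \<longleftrightarrow>
    (\<forall>x\<in>S. \<forall>e>0. \<exists>d>0. \<forall>f\<in>\<F>. \<forall>x'\<in>S. dist x' x < d \<longrightarrow> dist (f x') (f x) \<le> e)"

definition pointwise_limits :: "'a set \<Rightarrow> ('a \<Rightarrow> 'b::topological_space) set \<Rightarrow> ('a \<Rightarrow> 'b) set"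
  where "pointwise_limits S \<F> = {g. \<exists>h. (\<forall>n. h n \<in> \<F>) \<and> (\<forall>x\<in>S. (\<lambda>n. h n x) \<longlonglongrightarrow> g x)}"

lemma subset_pointwise_limits: "\<F> \<subseteq> pointwise_limits S \<F>"
  by (auto simp: pointwise_limits_def intro!: exI[of _ "\<lambda>_. f" for f])

lemma equicontinuous_on_pointwise_limits:
  assumes "equicontinuous_on S \<F>"
  shows "equicontinuous_on S (pointwise_limits S \<F>)"
  unfolding equicontinuous_on_def
proof (intro ballI allI impI)
  fix x and e :: real assume x: "x \<in> S" and e: "0 < e"
  then obtain d where "d > 0"
    and d: "\<And>f x'. f \<in> \<F> \<Longrightarrow> x' \<in> S \<Longrightarrow> dist x' x < d \<Longrightarrow> dist (f x') (f x) \<le> e"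
    using assms unfolding equicontinuous_on_def by metis
  have "dist (g x') (g x) \<le> e"
    if "g \<in> pointwise_limits S \<F>" "x' \<in> S" "dist x' x < d" for g x'
  proof -
    obtain h where h: "\<And>n. h n \<in> \<F>" "\<And>y. y \<in> S \<Longrightarrow> (\<lambda>n. h n y) \<longlonglongrightarrow> g y"
      using \<open>g \<in> pointwise_limits S \<F>\<close> unfolding pointwise_limits_def by blast
    have "(\<lambda>n. dist (h n x') (h n x)) \<longlonglongrightarrow> dist (g x') (g x)"
      by (intro tendsto_dist h \<open>x' \<in> S\<close> x)
    then show ?thesis by (rule LIMSEQ_le_const2) (use d h that in auto)
  qed
  with \<open>d > 0\<close> show "\<exists>d>0. \<forall>g\<in>pointwise_limits S \<F>. \<forall>x'\<in>S. dist x' x < d \<longrightarrow> dist (g x') (g x) \<le> e"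
    by blast
qed

lemma equicontinuous_on_tendsto_from_dense:
  assumes eq: "equicontinuous_on S \<F>" and h: "\<And>n. h n \<in> \<F>" and g: "g \<in> \<F>"
    and D: "D \<subseteq> S" "S \<subseteq> closure D" and lim: "\<And>y. y \<in> D \<Longrightarrow> (\<lambda>n. h n y) \<longlonglongrightarrow> g y"
    and x: "x \<in> S"
  shows "(\<lambda>n. h n x) \<longlonglongrightarrow> g x"
proof (rule tendstoI)
  fix e :: real assume "0 < e"
  then obtain d where "d > 0"
    and d: "\<And>f x'. f \<in> \<F> \<Longrightarrow> x' \<in> S \<Longrightarrow> dist x' x < d \<Longrightarrow> dist (f x') (f x) \<le> e / 3"
    using eq x unfolding equicontinuous_on_def by (metis divide_pos_pos zero_less_numeral)
  obtain y where y: "y \<in> D" "dist y x < d"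
    using D(2) x \<open>d > 0\<close> closure_approachable by blast
  have "\<forall>\<^sub>F n in sequentially. dist (h n y) (g y) < e / 3"
    using tendstoD[OF lim[OF y(1)], of "e / 3"] \<open>0 < e\<close> by simp
  then show "\<forall>\<^sub>F n in sequentially. dist (h n x) (g x) < e"
  proof (rule eventually_mono)
    fix n assume "dist (h n y) (g y) < e / 3"
    moreover have "dist (h n y) (h n x) \<le> e / 3" "dist (g y) (g x) \<le> e / 3"
      using d[OF h] d[OF g] y D(1) by auto
    ultimately show "dist (h n x) (g x) < e"
      using dist_triangle[of "h n x" "g x" "h n y"] dist_triangle[of "h n y" "g x" "g y"]
        dist_commute[of "h n x" "h n y"] by linarith
  qed
qed

lemma LIMSEQ_dist_le_inverse_Suc:
  fixes a b :: "nat \<Rightarrow> 'a::real_normed_vector"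
  assumes "b \<longlonglongrightarrow> l" and "\<And>n. n \<ge> N \<Longrightarrow> dist (a n) (b n) \<le> inverse (Suc n)"
  shows "a \<longlonglongrightarrow> l"
proof (rule Lim_transform[OF assms(1)])
  have "\<forall>\<^sub>F n in sequentially. norm (a n - b n) \<le> inverse (Suc n)"
    using assms(2) unfolding eventually_sequentially by (auto simp: dist_norm)
  then show "(\<lambda>n. a n - b n) \<longlonglongrightarrow> 0"
    by (rule Lim_null_comparison[OF _ LIMSEQ_inverse_real_of_nat])
qed

lemma diagonal_pointwise_tendsto:
  fixes X :: "nat \<Rightarrow> nat \<Rightarrow> 'b::real_normed_vector" and f :: "nat \<Rightarrow> nat \<Rightarrow> 'a \<Rightarrow> real"
  assumes D: "countable D"
    and X: "\<And>n. X n \<longlonglongrightarrow> x"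
    and f_lim: "\<And>n s. s \<in> D \<Longrightarrow> (\<lambda>k. f n k s) \<longlonglongrightarrow> gs n s"
    and gs_lim: "\<And>s. s \<in> D \<Longrightarrow> (\<lambda>n. gs n s) \<longlonglongrightarrow> g s"
  obtains k where "(\<lambda>n. X n (k n)) \<longlonglongrightarrow> x" "\<And>s. s \<in> D \<Longrightarrow> (\<lambda>n. f n (k n) s) \<longlonglongrightarrow> g s"
proof -
  \<comment> \<open>The guard \<open>e i \<in> D\<close> below only matters for empty \<open>D\<close>, where \<open>from_nat_into\<close> is arbitrary.\<close>
  define e where "e = from_nat_into D"
  have "\<exists>k. dist (X n k) x < inverse (Suc n) \<and>
      (\<forall>i\<in>{i. i \<le> n \<and> e i \<in> D}. dist (f n k (e i)) (gs n (e i)) < inverse (Suc n))" for n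
  proof -
    have pos: "0 < inverse (real (Suc n))" by simp
    have "\<forall>\<^sub>F k in sequentially. dist (X n k) x < inverse (Suc n)"
      using tendstoD[OF X pos] .
    moreover have "\<forall>\<^sub>F k in sequentially.
        \<forall>i\<in>{i. i \<le> n \<and> e i \<in> D}. dist (f n k (e i)) (gs n (e i)) < inverse (Suc n)"
      by (rule eventually_ball_finite) (simp, use tendstoD[OF f_lim pos] in blast)
    ultimately have "\<forall>\<^sub>F k in sequentially. dist (X n k) x < inverse (Suc n) \<and>
      (\<forall>i\<in>{i. i \<le> n \<and> e i \<in> D}. dist (f n k (e i)) (gs n (e i)) < inverse (Suc n))"
      by (rule eventually_conj)
    then show ?thesis by (rule eventually_happens'[OF sequentially_bot])
  qed
  then obtain k where k: "\<And>n. dist (X n (k n)) x \<le> inverse (Suc n)"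
    "\<And>n i. i \<le> n \<Longrightarrow> e i \<in> D \<Longrightarrow> dist (f n (k n) (e i)) (gs n (e i)) \<le> inverse (Suc n)"
    by (metis (mono_tags, lifting) mem_Collect_eq less_imp_le)
  show ?thesis
  proof
    show "(\<lambda>n. X n (k n)) \<longlonglongrightarrow> x"
      using k(1) by (intro LIMSEQ_dist_le_inverse_Suc[OF tendsto_const, of 0]) auto
  next
    fix s assume "s \<in> D"
    then obtain i where "s = e i" "e i \<in> D"
      using subset_range_from_nat_into[OF D] unfolding e_def by blast
    then show "(\<lambda>n. f n (k n) s) \<longlonglongrightarrow> g s"
      using k(2) by (intro LIMSEQ_dist_le_inverse_Suc[OF gs_lim, of s i]) auto
  qed
qed

lemma equicontinuous_on_diagonal_tendsto:
  fixes S :: "'a::{metric_space, second_countable_topology} set"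
    and X :: "nat \<Rightarrow> nat \<Rightarrow> 'b::real_normed_vector" and f :: "nat \<Rightarrow> nat \<Rightarrow> 'a \<Rightarrow> real"
  assumes eq: "equicontinuous_on S \<F>" and f_in: "\<And>n k. f n k \<in> \<F>" and g_in: "g \<in> \<F>"
    and X: "\<And>n. X n \<longlonglongrightarrow> x"
    and f_lim: "\<And>n y. y \<in> S \<Longrightarrow> (\<lambda>k. f n k y) \<longlonglongrightarrow> gs n y"
    and gs_lim: "\<And>y. y \<in> S \<Longrightarrow> (\<lambda>n. gs n y) \<longlonglongrightarrow> g y"
  obtains k where "(\<lambda>n. X n (k n)) \<longlonglongrightarrow> x" "\<And>y. y \<in> S \<Longrightarrow> (\<lambda>n. f n (k n) y) \<longlonglongrightarrow> g y"
proof -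
  obtain D where D: "countable D" "D \<subseteq> S" "S \<subseteq> closure D"
    using separable by blast
  have "\<And>n s. s \<in> D \<Longrightarrow> (\<lambda>k. f n k s) \<longlonglongrightarrow> gs n s" "\<And>s. s \<in> D \<Longrightarrow> (\<lambda>n. gs n s) \<longlonglongrightarrow> g s"
    using f_lim gs_lim D(2) by auto
  then obtain k where k: "(\<lambda>n. X n (k n)) \<longlonglongrightarrow> x" "\<And>s. s \<in> D \<Longrightarrow> (\<lambda>n. f n (k n) s) \<longlonglongrightarrow> g s"
    using diagonal_pointwise_tendsto[where X = X and f = f, OF D(1) X] by blast
  show ?thesis
    using that k(1) equicontinuous_on_tendsto_from_dense[OF eq f_in g_in D(2,3) k(2)] by blast
qed

lemma open_cone_scaleR:
  assumes "open_cone T" "0 < c" "x \<in> T"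
  shows "c *\<^sub>R x \<in> T"
  using assms unfolding open_cone_def by blast

lemma open_cone_add:
  assumes oc: "open_cone T" and "u \<in> T" "v \<in> T"
  shows "u + v \<in> T"
proof -
  have "convex T" using oc unfolding open_cone_def by blast
  then have "(1/2) *\<^sub>R u + (1/2) *\<^sub>R v \<in> T"
    using assms(2,3) by (rule convexD) auto
  then have "2 *\<^sub>R ((1/2) *\<^sub>R u + (1/2) *\<^sub>R v) \<in> T"
    by (rule open_cone_scaleR[OF oc, rotated]) simp
  then show ?thesis by (simp add: scaleR_add_right)
qed

lemma open_cone_add_closure:
  assumes oc: "open_cone T" and x: "x \<in> T" and y: "y \<in> closure T"
  shows "x + y \<in> T"
proof -
  have "open T" using oc unfolding open_cone_def by blast
  then obtain r where r: "r > 0" "ball x r \<subseteq> T" using x openE by blast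
  obtain y' where y': "y' \<in> T" "dist y' y < r" using y r closure_approachable by blast
  have "x + y - y' \<in> ball x r" using y' by (simp add: dist_norm norm_minus_commute)
  then have "x + y - y' \<in> T" using r by blast
  from open_cone_add[OF oc this y'(1)] show ?thesis by simp
qed

lemma open_cone_closure_scaleR:
  assumes oc: "open_cone T" and c: "0 < c" and a: "a \<in> closure T"
  shows "c *\<^sub>R a \<in> closure T"
proof -
  have "c *\<^sub>R a \<in> closure ((*\<^sub>R) c ` T)" using a closure_scaleR[of c T] by blast
  moreover have "(*\<^sub>R) c ` T \<subseteq> T" using open_cone_scaleR[OF oc c] by blast
  ultimately show ?thesis using closure_mono by blast
qed

lemma open_cone_closure_add:
  assumes oc: "open_cone T" and "a \<in> closure T" "b \<in> closure T"
  shows "a + b \<in> closure T"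
proof -
  have "convex (closure T)" using oc unfolding open_cone_def by simp
  then have "(1/2) *\<^sub>R a + (1/2) *\<^sub>R b \<in> closure T"
    using assms(2,3) by (rule convexD) auto
  from open_cone_closure_scaleR[OF oc _ this, of 2] show ?thesis
    by (simp add: scaleR_add_right)
qed

lemma open_cone_uminus_notin_closure:
  assumes oc: "open_cone T" and "x \<in> T"
  shows "- x \<notin> closure T"
proof
  assume "- x \<in> closure T"
  from open_cone_add_closure[OF oc \<open>x \<in> T\<close> this] have "0 \<in> T" by simp
  then show False using oc unfolding open_cone_def by blast
qed

lemma open_cone_order_unit:
  assumes oc: "open_cone T" and w: "w \<in> T"
  obtains c where "c > 0" "c *\<^sub>R w - y \<in> T"
proof -
  have "open T" using oc unfolding open_cone_def by blast
  then obtain r where r: "r > 0" "ball w r \<subseteq> T" using w openE by blast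
  define c where "c = norm y / r + 1"
  have c: "c > 0" unfolding c_def using r by (simp add: add_nonneg_pos)
  have "norm y < r * c" unfolding c_def using r by (simp add: field_simps)
  then have "w - (1/c) *\<^sub>R y \<in> ball w r" using c by (simp add: dist_norm field_simps)
  then have "c *\<^sub>R (w - (1/c) *\<^sub>R y) \<in> T" using r c by (blast intro: open_cone_scaleR[OF oc])
  then show ?thesis using c that by (simp add: scaleR_diff_right)
qed

lemma funk_M_le:
  assumes "c > 0" "c *\<^sub>R w - y \<in> closure T"
  shows "funk_M T y w \<le> c"
  unfolding funk_M_def
  by (rule cInf_lower) (use assms in \<open>auto simp: cone_le_def bdd_below_def intro!: exI[of _ 0]\<close>)

lemma funk_M_greatest:
  assumes oc: "open_cone T" and w: "w \<in> T"
    and "\<And>c. c > 0 \<Longrightarrow> c *\<^sub>R w - y \<in> closure T \<Longrightarrow> m \<le> c"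
  shows "m \<le> funk_M T y w"
proof -
  obtain c where "c > 0" "c *\<^sub>R w - y \<in> T" using open_cone_order_unit[OF oc w] .
  then have "{c. c > 0 \<and> cone_le T y (c *\<^sub>R w)} \<noteq> {}"
    using closure_subset by (auto simp: cone_le_def)
  then show ?thesis
    unfolding funk_M_def by (rule cInf_greatest) (use assms in \<open>auto simp: cone_le_def\<close>)
qed

lemma funk_M_pos:
  assumes oc: "open_cone T" and y: "y \<in> T" and w: "w \<in> T"
  shows "0 < funk_M T y w"
proof -
  have "open T" using oc unfolding open_cone_def by blast
  then obtain r where r: "r > 0" "ball y r \<subseteq> T" using y openE by blast
  have "w \<noteq> 0" using w oc unfolding open_cone_def by blast
  then have nw: "norm w > 0" by simp
  have "r / norm w \<le> funk_M T y w"
  proof (rule funk_M_greatest[OF oc w])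
    fix c :: real assume c: "c > 0" "c *\<^sub>R w - y \<in> closure T"
    show "r / norm w \<le> c"
    proof (rule ccontr)
      assume "\<not> r / norm w \<le> c"
      then have "y - c *\<^sub>R w \<in> ball y r" using nw c by (simp add: dist_norm field_simps)
      then have "y - c *\<^sub>R w \<in> T" using r by blast
      from open_cone_uminus_notin_closure[OF oc this] c(2) show False by simp
    qed
  qed
  moreover have "r / norm w > 0" using r nw by simp
  ultimately show ?thesis by linarith
qed

lemma funk_M_submult:
  assumes oc: "open_cone T" and y: "y \<in> T" and w: "w \<in> T" and z: "z \<in> T"
  shows "funk_M T y z \<le> funk_M T y w * funk_M T w z"
proof -
  have prod: "funk_M T y z \<le> a * b"
    if a: "a > 0" "a *\<^sub>R w - y \<in> closure T" and b: "b > 0" "b *\<^sub>R z - w \<in> closure T" for a b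
  proof (rule funk_M_le)
    show "a * b > 0" using a b by simp
    have "(a * b) *\<^sub>R z - y = a *\<^sub>R (b *\<^sub>R z - w) + (a *\<^sub>R w - y)"
      by (simp add: algebra_simps)
    then show "(a * b) *\<^sub>R z - y \<in> closure T"
      using open_cone_closure_add[OF oc open_cone_closure_scaleR[OF oc a(1) b(2)] a(2)] by metis
  qed
  have pos: "funk_M T y w > 0" using funk_M_pos[OF oc y w] .
  have "funk_M T y z / b \<le> funk_M T y w"
    if b: "b > 0" "b *\<^sub>R z - w \<in> closure T" for b
    by (rule funk_M_greatest[OF oc w]) (use prod[OF _ _ b] b in \<open>simp add: field_simps\<close>)
  then have "funk_M T y z / funk_M T y w \<le> funk_M T w z"
    by (intro funk_M_greatest[OF oc z]) (simp add: pos field_simps)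
  then show ?thesis using pos by (simp add: field_simps)
qed

lemma funk_M_le_of_dist:
  assumes oc: "open_cone T" and r: "ball w r \<subseteq> T" and c: "c > 1"
    and d: "dist y w < (c - 1) * r"
  shows "funk_M T y w \<le> c"
proof (rule funk_M_le)
  have "norm ((1 / (c - 1)) *\<^sub>R (w - y)) = dist y w / (c - 1)"
    using c by (simp add: dist_norm norm_minus_commute)
  also have "\<dots> < r" using c d by (simp add: field_simps)
  finally have "norm ((1 / (c - 1)) *\<^sub>R (w - y)) < r" .
  then have "w + (1 / (c - 1)) *\<^sub>R (w - y) \<in> T" using r by (auto simp: dist_norm)
  then have "(c - 1) *\<^sub>R (w + (1 / (c - 1)) *\<^sub>R (w - y)) \<in> T"
    using c by (intro open_cone_scaleR[OF oc]) auto
  moreover have "(c - 1) *\<^sub>R (w + (1 / (c - 1)) *\<^sub>R (w - y)) = c *\<^sub>R w - y"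
    using c by (simp add: algebra_simps)
  ultimately show "c *\<^sub>R w - y \<in> closure T" using closure_subset by auto
qed (use c in simp)

lemma funk_F_triangle:
  assumes "open_cone T" "y \<in> T" "w \<in> T" "z \<in> T"
  shows "funk_F T y z \<le> funk_F T y w + funk_F T w z"
proof -
  have "0 < funk_M T y z" "0 < funk_M T y w" "0 < funk_M T w z"
    using funk_M_pos assms by auto
  then have "ln (funk_M T y z) \<le> ln (funk_M T y w * funk_M T w z)"
    using funk_M_submult[OF assms] by simp
  with \<open>0 < funk_M T y w\<close> \<open>0 < funk_M T w z\<close> show ?thesis
    by (simp add: funk_F_def ln_mult)
qed

lemma funk_F_le_of_dist:
  assumes oc: "open_cone T" and y: "y \<in> T" and r: "ball w r \<subseteq> T" and c: "c > 1"
    and d: "dist y w < (c - 1) * r"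
  shows "funk_F T y w \<le> ln c"
proof -
  have "0 < (c - 1) * r" using d zero_le_dist[of y w] by linarith
  then have "r > 0" using c by (simp add: zero_less_mult_iff)
  then have "w \<in> T" using r by auto
  then have "0 < funk_M T y w" using funk_M_pos[OF oc y] by blast
  then show ?thesis using funk_M_le_of_dist[OF oc r c d] by (simp add: funk_F_def)
qed

definition funk_embedding :: "'a::euclidean_space set \<Rightarrow> 'a \<Rightarrow> 'a \<Rightarrow> 'a \<Rightarrow> real"
  where "funk_embedding T b z y = funk_F T y z - funk_F T b z"

lemma funk_converges_iff:
  "funk_converges T b xs g \<longleftrightarrow> (\<forall>y\<in>T. (\<lambda>n. funk_embedding T b (xs n) y) \<longlonglongrightarrow> g y)"
  by (simp add: funk_converges_def funk_embedding_def)

lemma equicontinuous_on_funk_embedding: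
  assumes oc: "open_cone T"
  shows "equicontinuous_on T (funk_embedding T b ` T)"
  unfolding equicontinuous_on_def
proof (intro ballI allI impI)
  fix w and e :: real assume w: "w \<in> T" and e: "0 < e"
  have "open T" using oc unfolding open_cone_def by blast
  then obtain r where r: "r > 0" "ball w r \<subseteq> T" using w openE by blast
  define c where "c = exp e"
  have c: "c > 1" "ln c = e" unfolding c_def using e by auto
  define d where "d = min (r / 2) ((c - 1) * (r / 2))"
  have "dist (f y) (f w) \<le> e" if f: "f \<in> funk_embedding T b ` T" and y: "y \<in> T" "dist y w < d" for f y
  proof -
    obtain z where z: "z \<in> T" "f = funk_embedding T b z" using f by blast
    have "dist y w + r / 2 \<le> r" using y(2) unfolding d_def by simp
    then have "ball y (r / 2) \<subseteq> ball w r" by (simp add: ball_subset_ball_iff)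
    have "(c - 1) * r > 0" using c r by simp
    then have "dist y w < (c - 1) * r" using y(2) unfolding d_def by linarith
    then have yw: "funk_F T y w \<le> e" using funk_F_le_of_dist[OF oc y(1) r(2) c(1)] c by simp
    have "dist w y < (c - 1) * (r / 2)" using y(2) unfolding d_def by (simp add: dist_commute)
    moreover have "ball y (r / 2) \<subseteq> T" using \<open>ball y (r / 2) \<subseteq> ball w r\<close> r(2) by blast
    ultimately have wy: "funk_F T w y \<le> e"
      using funk_F_le_of_dist[OF oc w _ c(1)] c(2) by blast
    show ?thesis
      using funk_F_triangle[OF oc y(1) w z(1)] funk_F_triangle[OF oc w y(1) z(1)] yw wy
      by (simp add: z(2) funk_embedding_def dist_real_def)
  qed
  moreover have "d > 0" unfolding d_def using r c by simp
  ultimately show "\<exists>d>0. \<forall>f\<in>funk_embedding T b ` T. \<forall>y\<in>T. dist y w < d \<longrightarrow> dist (f y) (f w) \<le> e"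
    by blast
qed

theorem mainTheorem18:
  fixes T :: "'a::euclidean_space set" and b x :: 'a
    and gs :: "nat \<Rightarrow> 'a \<Rightarrow> real" and g :: "'a \<Rightarrow> real"
  assumes "open_cone T" and "b \<in> T"
    and "x \<in> frontier T - cone_zero T"
    and "\<And>n. funk_A T b x (gs n)"
    and "\<And>y. y \<in> T \<Longrightarrow> (\<lambda>n. gs n y) \<longlonglongrightarrow> g y"
    and "funk_horofunction T b g"
  shows "funk_A T b x g"
proof -
  obtain X where X: "\<And>n k. X n k \<in> T" "\<And>n. X n \<longlonglongrightarrow> x" "\<And>n. funk_converges T b (X n) (gs n)"
    using assms(4) unfolding funk_A_def by metis
  define \<G> where "\<G> = pointwise_limits T (pointwise_limits T (funk_embedding T b ` T))"
  have \<G>: "equicontinuous_on T \<G>"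
    unfolding \<G>_def
    by (intro equicontinuous_on_pointwise_limits equicontinuous_on_funk_embedding assms(1))
  have embedding_in_\<G>: "funk_embedding T b (X n k) \<in> \<G>" for n k
    using X(1) subset_pointwise_limits unfolding \<G>_def by blast
  have embedding_lim: "(\<lambda>k. funk_embedding T b (X n k) y) \<longlonglongrightarrow> gs n y" if "y \<in> T" for n y
    using X(3)[of n] that unfolding funk_converges_iff by blast
  have "gs n \<in> pointwise_limits T (funk_embedding T b ` T)" for n
    using X(1) embedding_lim unfolding pointwise_limits_def
    by (intro CollectI exI[of _ "\<lambda>k. funk_embedding T b (X n k)"]) blast
  then have g_in_\<G>: "g \<in> \<G>"
    using assms(5) unfolding \<G>_def pointwise_limits_def by blast
  obtain k where "(\<lambda>n. X n (k n)) \<longlonglongrightarrow> x"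
    "\<And>y. y \<in> T \<Longrightarrow> (\<lambda>n. funk_embedding T b (X n (k n)) y) \<longlonglongrightarrow> g y"
    using equicontinuous_on_diagonal_tendsto[where X = X and f = "\<lambda>n k. funk_embedding T b (X n k)"
        and gs = gs, OF \<G> embedding_in_\<G> g_in_\<G> X(2) embedding_lim assms(5)] by blast
  with assms(6) X(1) show ?thesis
    unfolding funk_A_def funk_converges_iff by (intro conjI exI[of _ "\<lambda>n. X n (k n)"]) auto
qed

end
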